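(* Let $T_{\mathfrak{sl}_3} \in \mathfrak{sl}_3^* \otimes \mathfrak{sl}_3^* \otimes \mathfrak{sl}_3$ be the structure tensor of the complex Lie algebra $\mathfrak{sl}_3$. Then its tensor rank satisfies $\mathbf{R}(T_{\mathfrak{sl}_3}) \leq 20$.
   Context: $\mathfrak{sl}_n$ denotes the Lie algebra of traceless $n\times n$ complex matrices with bracket $[x,y]=xy-yx$. Its structure tensor $T_{\mathfrak{sl}_n}\in \mathfrak{sl}_n^*\otimes\mathfrak{sl}_n^*\otimes\mathfrak{sl}_n$ is the tensor corresponding to the bilinear map $(x,y)\mapsto [x,y]$; in a basis $\{a_i\}$ with dual basis $\{\alpha^i\}$ and $[a_i,a_j]=\sum_k A_{ij}^k a_k$, it is $\sum_{i,j,k} A_{ij}^k\,\alpha^i\otimes\alpha^j\otimes a_k$. For a tensor $T\in A\otimes B\otimes C$ over $\mathbb{C}$, the rank $\mathbf{R}(T)$ is the minimal $r$ such that $T=\sum_{i=1}^r a_i\otimes b_i\otimes c_i$ with $a_i\in A$, $b_i\in B$, $c_i\in C$. *)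

theory Defs
  imports "HOL-Analysis.Analysis"
begin

definition sl :: "(complex^'n^'n) set" where
  "sl = {x. trace x = 0}"

text \<open>A complex linear functional on n x n matrices, represented by its coefficient matrix.
  Every linear functional on sl_n is the restriction of such a functional.\<close>
definition mat_functional :: "complex^'n^'n \<Rightarrow> complex^'n^'n \<Rightarrow> complex" where
  "mat_functional a x = (\<Sum>j\<in>UNIV. \<Sum>k\<in>UNIV. a $ j $ k * x $ j $ k)"

definition mat_scale :: "complex \<Rightarrow> complex^'n^'n \<Rightarrow> complex^'n^'n" where
  "mat_scale s m = (\<chi> j k. s * m $ j $ k)"

text \<open>The structure tensor of sl_n, viewed as the bilinear map (x,y) to [x,y], admits a
  decomposition into r rank-one tensors alpha_i (x) beta_i (x) c_i with alpha_i, beta_i in sl_n^*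
  and c_i in sl_n.\<close>
definition sl_struct_decomp :: "'n::finite itself \<Rightarrow> nat \<Rightarrow> bool" where
  "sl_struct_decomp (_ :: 'n itself) r \<longleftrightarrow>
     (\<exists>(a :: nat \<Rightarrow> complex^'n^'n) (b :: nat \<Rightarrow> complex^'n^'n) (c :: nat \<Rightarrow> complex^'n^'n).
        (\<forall>i<r. c i \<in> sl) \<and>
        (\<forall>x\<in>sl. \<forall>y\<in>sl.
           x ** y - y ** x = (\<Sum>i<r. mat_scale (mat_functional (a i) x * mat_functional (b i) y) (c i))))"

definition sl_struct_rank :: "'n::finite itself \<Rightarrow> nat" where
  "sl_struct_rank (_ :: 'n itself) = (LEAST r. sl_struct_decomp TYPE('n) r)"

end

theory Submission
  imports Defs
begin

text \<open>The bound is witnessed by an explicit decomposition of the bracket of \<open>sl\<^sub>3\<close> into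
  twenty rank-one terms with rational coefficients. The decomposition only has to agree with the
  bracket on traceless matrices, so \<open>x$3$3\<close> and \<open>y$3$3\<close> are eliminated first; what remains is
  an identity between bilinear polynomials in the sixteen other entries, checked entry by entry.\<close>

lemma sl_struct_rank_le:
  "sl_struct_decomp TYPE('n::finite) r \<Longrightarrow> sl_struct_rank TYPE('n) \<le> r"
  unfolding sl_struct_rank_def by (rule Least_le)

lemma sl_struct_decomp_sum_list:
  fixes ts :: "((complex^'n::finite^'n) \<times> (complex^'n^'n) \<times> (complex^'n^'n)) list"
  assumes outputs_traceless: "\<forall>(a, b, c) \<in> set ts. c \<in> sl"
    and bracket_eq: "\<And>x y. x \<in> sl \<Longrightarrow> y \<in> sl \<Longrightarrow>
      x ** y - y ** x = (\<Sum>(a, b, c) \<leftarrow> ts. mat_scale (mat_functional a x * mat_functional b y) c)"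
  shows "sl_struct_decomp TYPE('n) (length ts)"
  unfolding sl_struct_decomp_def
proof (intro exI conjI ballI allI impI)
  fix i assume "i < length ts"
  then show "snd (snd (ts ! i)) \<in> sl"
    using outputs_traceless nth_mem by fastforce
next
  fix x y :: "complex^'n^'n" assume "x \<in> sl" "y \<in> sl"
  then show "x ** y - y ** x = (\<Sum>i<length ts.
      mat_scale (mat_functional (fst (ts ! i)) x * mat_functional (fst (snd (ts ! i))) y)
        (snd (snd (ts ! i))))"
    by (simp add: bracket_eq sum_list_sum_nth atLeast0LessThan case_prod_beta)
qed

lemma trace3_eq_0_iff:
  fixes x :: "'a::comm_ring_1^3^3"
  shows "trace x = 0 \<longleftrightarrow> x$3$3 = - x$1$1 - x$2$2"
  by (auto simp: trace_def sum_3 algebra_simps eq_neg_iff_add_eq_0)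

definition sl3_bracket_terms :: "((complex^3^3) \<times> (complex^3^3) \<times> (complex^3^3)) list" where
  "sl3_bracket_terms = [
    (vector [vector [0, 0, 0], vector [0, 0, 1], vector [0, 0, 0]],
     vector [vector [-1/2, 0, 0], vector [1/2, 0, -1/4], vector [-1/2, -1/2, -1]],
     vector [vector [0, 0, 0], vector [0, 0, -2], vector [0, -2, 0]]),
    (vector [vector [1/2, 0, 0], vector [-1/2, 0, 3/4], vector [1/2, 1, 1]],
     vector [vector [0, 0, 0], vector [0, 0, 1], vector [0, -1/2, 0]],
     vector [vector [0, -4/3, 4/3], vector [0, -4/3, 4/3], vector [0, -10/3, 4/3]]),
    (vector [vector [1/2, 0, 0], vector [-1/2, 0, -3/4], vector [1/2, 1, 1]],
     vector [vector [0, 0, 0], vector [0, 0, 1], vector [0, 1, 0]],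
     vector [vector [0, -2/3, 2/3], vector [0, -2/3, 2/3], vector [0, 1/3, 2/3]]),
    (vector [vector [-1/2, 0, 0], vector [1/2, 0, -1/4], vector [-1/2, -1/2, -1]],
     vector [vector [0, 0, 0], vector [0, 0, 1], vector [0, 0, 0]],
     vector [vector [0, -2, 2], vector [0, -2, 4], vector [0, -3, 2]]),
    (vector [vector [0, 0, 0], vector [0, 0, 1], vector [0, 1, 0]],
     vector [vector [1/2, 0, 0], vector [-1/2, 0, -3/4], vector [1/2, 1, 1]],
     vector [vector [0, 0, 0], vector [0, 0, 0], vector [0, -2, 0]]),
    (vector [vector [1/2, 1/2, 0], vector [0, 0, 0], vector [1, -1/2, -1/2]],
     vector [vector [1/2, 1/2, 1], vector [0, 0, 0], vector [-1, -1/2, -1/2]],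
     vector [vector [0, 0, 0], vector [0, 0, 0], vector [1, 0, 0]]),
    (vector [vector [0, 0, 0], vector [0, 0, 0], vector [1, 0, 0]],
     vector [vector [0, 0, 1], vector [0, 0, 0], vector [0, 0, 0]],
     vector [vector [-1, 0, 2], vector [-1, 0, 1], vector [-2, 0, 1]]),
    (vector [vector [-1/2, -1/2, 0], vector [0, 0, 0], vector [1, 1/2, 1/2]],
     vector [vector [1/2, 1/2, 1], vector [0, 0, 0], vector [1, -1/2, -1/2]],
     vector [vector [0, 0, -2], vector [0, 0, 0], vector [1, 0, 0]]),
    (vector [vector [1/2, 1/2, 1], vector [0, 0, 0], vector [-1, -1/2, -1/2]],
     vector [vector [1/2, 1/2, 0], vector [0, 0, 0], vector [1, -1/2, -1/2]],
     vector [vector [0, 0, -2], vector [0, 0, 0], vector [0, 0, 0]]),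
    (vector [vector [0, 0, 1], vector [0, 0, 0], vector [0, 0, 0]],
     vector [vector [0, 0, 0], vector [0, 0, 0], vector [1, 0, 0]],
     vector [vector [1, 0, 2], vector [1, 0, -1], vector [0, 0, -1]]),
    (vector [vector [-1, 1/2, -1/2], vector [1, 0, 1/2], vector [0, 0, -1/2]],
     vector [vector [1, -1/2, 1/2], vector [1, 0, -1/2], vector [0, 0, 1/2]],
     vector [vector [0, -1/2, 0], vector [1, 0, 0], vector [0, 0, 0]]),
    (vector [vector [2/3, 1, 1/3], vector [0, 0, -1/3], vector [0, 0, 1/3]],
     vector [vector [-2/5, 1, -1/5], vector [0, 0, 1/5], vector [0, 0, -1/5]],
     vector [vector [0, 15/4, 0], vector [0, 0, 0], vector [0, 0, 0]]),
    (vector [vector [0, 1, 0], vector [1/2, 0, 0], vector [0, 0, 0]],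
     vector [vector [0, 1, 0], vector [-1/2, 0, 0], vector [0, 0, 0]],
     vector [vector [-1, -2, 0], vector [1, 1, 0], vector [-1, 1, 0]]),
    (vector [vector [1, -1/2, 1/2], vector [1, 0, -1/2], vector [0, 0, 1/2]],
     vector [vector [-1, 1/2, -1/2], vector [1, 0, 1/2], vector [0, 0, -1/2]],
     vector [vector [0, -1/2, 0], vector [-1, 0, 0], vector [0, 0, 0]]),
    (vector [vector [0, 1, 0], vector [-1/2, 0, 0], vector [0, 0, 0]],
     vector [vector [0, 1, 0], vector [1/2, 0, 0], vector [0, 0, 0]],
     vector [vector [1, -2, 0], vector [-1, -1, 0], vector [1, -1, 0]]),
    (vector [vector [0, 0, 1], vector [1, 0, -1], vector [-1, 0, 0]],
     vector [vector [0, 1, 1], vector [1, 0, -1], vector [-1, -1, 0]],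
     vector [vector [0, -1/2, 1/2], vector [-1/2, 0, 1/2], vector [1/2, -1/2, 0]]),
    (vector [vector [0, 1, 1], vector [1, 0, -1], vector [-1, -1, 0]],
     vector [vector [0, 0, 1], vector [1, 0, -1], vector [-1, 0, 0]],
     vector [vector [0, 1/2, -1/2], vector [0, 0, 0], vector [-1/2, 1/2, 0]]),
    (vector [vector [0, 0, 1], vector [-1, 0, -1], vector [1, 0, 0]],
     vector [vector [0, 1, -1], vector [1, 0, 1], vector [-1, -1, 0]],
     vector [vector [0, -1/2, 1/2], vector [-1/2, 0, 1/2], vector [-1/2, 1/2, 0]]),
    (vector [vector [0, 1, -1], vector [1, 0, 1], vector [-1, -1, 0]],
     vector [vector [0, 0, 1], vector [-1, 0, -1], vector [1, 0, 0]],
     vector [vector [0, 1/2, -1/2], vector [0, 0, 0], vector [1/2, -1/2, 0]]),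
    (vector [vector [0, 0, 1], vector [0, 0, -1], vector [0, 0, 0]],
     vector [vector [0, 1/2, 0], vector [1, 0, 0], vector [-1, -1/2, 0]],
     vector [vector [0, 0, 0], vector [2, 0, -2], vector [0, 0, 0]])]"

lemma length_sl3_bracket_terms: "length sl3_bracket_terms = 20"
  by (simp add: sl3_bracket_terms_def)

lemma sl3_bracket_terms_traceless: "\<forall>(a, b, c) \<in> set sl3_bracket_terms. c \<in> sl"
  by (simp add: sl3_bracket_terms_def sl_def trace_def sum_3)

lemma sl3_bracket_eq_sum_terms:
  fixes x y :: "complex^3^3"
  assumes "x \<in> sl" and "y \<in> sl"
  shows "x ** y - y ** x =
    (\<Sum>(a, b, c) \<leftarrow> sl3_bracket_terms. mat_scale (mat_functional a x * mat_functional b y) c)"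
proof -
  have x33: "x$3$3 = - x$1$1 - x$2$2" and y33: "y$3$3 = - y$1$1 - y$2$2"
    using assms by (simp_all add: sl_def trace3_eq_0_iff)
  show ?thesis
    unfolding vec_eq_iff forall_3
    by (simp add: sl3_bracket_terms_def mat_functional_def mat_scale_def
        matrix_matrix_mult_def sum_3 x33 y33 algebra_simps)
qed

theorem theorem2:
  shows "sl_struct_rank TYPE(3) \<le> 20"
proof -
  have "sl_struct_decomp TYPE(3) (length sl3_bracket_terms)"
    using sl3_bracket_terms_traceless sl3_bracket_eq_sum_terms
    by (rule sl_struct_decomp_sum_list)
  then show ?thesis
    unfolding length_sl3_bracket_terms by (rule sl_struct_rank_le)
qed

end
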